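(* If $G$ and $H$ are connected graphs, then $\mathrm{gp}(G\boxtimes H)\ge \mathrm{gp}(G)\,\mathrm{gp}(H)$.
   Context: All graphs are finite and simple. The strong product $G\boxtimes H$ has vertex set $V(G)\times V(H)$, with distinct $(g,h),(g',h')$ adjacent iff ($g=g'$ or $gg'\in E(G)$) and ($h=h'$ or $hh'\in E(H)$). For a connected graph $G$, a set $S\subseteq V(G)$ is a general position set if no three pairwise distinct vertices of $S$ lie on a common geodesic (shortest path); $\mathrm{gp}(G)$ is the maximum cardinality of a general position set. *)

theory Defs
  imports Main
begin

definition simple_graph :: "'a set \<Rightarrow> ('a \<Rightarrow> 'a \<Rightarrow> bool) \<Rightarrow> bool" where
  "simple_graph V E \<longleftrightarrow> finite V \<and> (\<forall>x y. E x y \<longrightarrow> x \<in> V \<and> y \<in> V)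
     \<and> (\<forall>x y. E x y \<longrightarrow> E y x) \<and> (\<forall>x. \<not> E x x)"

definition walk :: "'a set \<Rightarrow> ('a \<Rightarrow> 'a \<Rightarrow> bool) \<Rightarrow> 'a list \<Rightarrow> bool" where
  "walk V E xs \<longleftrightarrow> xs \<noteq> [] \<and> set xs \<subseteq> V \<and> (\<forall>i. Suc i < length xs \<longrightarrow> E (xs ! i) (xs ! Suc i))"

definition walk_betw :: "'a set \<Rightarrow> ('a \<Rightarrow> 'a \<Rightarrow> bool) \<Rightarrow> 'a \<Rightarrow> 'a list \<Rightarrow> 'a \<Rightarrow> bool" where
  "walk_betw V E u xs v \<longleftrightarrow> walk V E xs \<and> hd xs = u \<and> last xs = v"

definition connected_graph :: "'a set \<Rightarrow> ('a \<Rightarrow> 'a \<Rightarrow> bool) \<Rightarrow> bool" where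
  "connected_graph V E \<longleftrightarrow> V \<noteq> {} \<and> (\<forall>u\<in>V. \<forall>v\<in>V. \<exists>xs. walk_betw V E u xs v)"

definition dist :: "'a set \<Rightarrow> ('a \<Rightarrow> 'a \<Rightarrow> bool) \<Rightarrow> 'a \<Rightarrow> 'a \<Rightarrow> nat" where
  "dist V E u v = (LEAST n. \<exists>xs. walk_betw V E u xs v \<and> length xs = Suc n)"

definition geodesic :: "'a set \<Rightarrow> ('a \<Rightarrow> 'a \<Rightarrow> bool) \<Rightarrow> 'a \<Rightarrow> 'a list \<Rightarrow> 'a \<Rightarrow> bool" where
  "geodesic V E u xs v \<longleftrightarrow> walk_betw V E u xs v \<and> length xs = Suc (dist V E u v)"

definition gp_set :: "'a set \<Rightarrow> ('a \<Rightarrow> 'a \<Rightarrow> bool) \<Rightarrow> 'a set \<Rightarrow> bool" where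
  "gp_set V E S \<longleftrightarrow> S \<subseteq> V \<and>
     (\<forall>x\<in>S. \<forall>y\<in>S. \<forall>z\<in>S. x \<noteq> y \<and> y \<noteq> z \<and> x \<noteq> z \<longrightarrow>
        \<not> (\<exists>u v xs. geodesic V E u xs v \<and> x \<in> set xs \<and> y \<in> set xs \<and> z \<in> set xs))"

definition gp :: "'a set \<Rightarrow> ('a \<Rightarrow> 'a \<Rightarrow> bool) \<Rightarrow> nat" where
  "gp V E = Max (card ` {S. gp_set V E S})"

definition strong_prod_edge :: "('a \<Rightarrow> 'a \<Rightarrow> bool) \<Rightarrow> ('b \<Rightarrow> 'b \<Rightarrow> bool) \<Rightarrow> ('a \<times> 'b) \<Rightarrow> ('a \<times> 'b) \<Rightarrow> bool" where
  "strong_prod_edge EG EH p q \<longleftrightarrow> p \<noteq> q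
     \<and> (fst p = fst q \<or> EG (fst p) (fst q)) \<and> (snd p = snd q \<or> EH (snd p) (snd q))"

end

theory Submission
  imports Defs
begin

text \<open>
  If S and T are general position sets of G and H, then so is S \<times> T in G \<boxtimes> H.
  Distances in the strong product are the maxima of the distances in the factors: a walk in
  G \<boxtimes> H projects to walks in G and H that are no longer, and two walks in G and H can be
  traversed simultaneously, the shorter one waiting at its endpoint. Now let (g1, h1),
  (g2, h2), (g3, h3) lie in this order on a geodesic of G \<boxtimes> H, at positive distances
  a and b. The distance a + b of the outer points is attained in one factor, say G, while
  d(g1, g2) \<le> a and d(g2, g3) \<le> b there. By the triangle inequality all three are
  equalities, so g2 lies on a geodesic from g1 to g3 in G, contradicting the choice of S.
\<close>

lemma walk_Cons_Cons: "walk V E (x # y # ys) \<longleftrightarrow> x \<in> V \<and> E x y \<and> walk V E (y # ys)"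
proof
  assume "walk V E (x # y # ys)"
  then show "x \<in> V \<and> E x y \<and> walk V E (y # ys)"
    unfolding walk_def by (auto dest: spec[of _ "Suc _"] spec[of _ 0])
next
  assume "x \<in> V \<and> E x y \<and> walk V E (y # ys)"
  then show "walk V E (x # y # ys)"
    unfolding walk_def by (auto simp: nth_Cons split: nat.split)
qed

lemma walk_append_tl:
  assumes "walk V E xs" "walk V E ys" "last xs = hd ys"
  shows "walk V E (xs @ tl ys)"
  using assms
proof (induction xs rule: induct_list012)
  case 1
  then show ?case by (simp add: walk_def)
next
  case (2 x)
  then show ?case by (cases ys) (auto simp: walk_def)
next
  case (3 x y zs)
  then show ?case by (simp add: walk_Cons_Cons)
qed

lemma walk_betw_append:
  assumes "walk_betw V E u xs v" "walk_betw V E v ys w"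
  shows "walk_betw V E u (xs @ tl ys) w" "length (xs @ tl ys) = length xs + length ys - 1"
proof -
  have "xs \<noteq> []" "ys \<noteq> []" using assms by (auto simp: walk_betw_def walk_def)
  then show "walk_betw V E u (xs @ tl ys) w"
    using assms walk_append_tl[of V E xs ys]
    by (auto simp: walk_betw_def last_append last_tl) (metis last_ConsL list.collapse)
  show "length (xs @ tl ys) = length xs + length ys - 1"
    using \<open>ys \<noteq> []\<close> by (cases ys) simp_all
qed

lemma walk_betw_subwalk:
  assumes "walk V E xs" "i \<le> k" "k < length xs"
  shows "walk_betw V E (xs ! i) (take (Suc (k - i)) (drop i xs)) (xs ! k)"
proof -
  let ?ys = "take (Suc (k - i)) (drop i xs)"
  have "length ?ys = Suc (k - i)" using assms by auto
  moreover have "set ?ys \<subseteq> V"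
    using assms(1) set_drop_subset set_take_subset unfolding walk_def by (meson order_trans)
  ultimately show ?thesis
    using assms by (auto simp: walk_betw_def walk_def hd_conv_nth last_conv_nth)
qed

lemma walk_betw_contract:
  assumes "walk_betw V E u xs v" "f ` V \<subseteq> V'"
    and "\<And>x y. E x y \<Longrightarrow> f x = f y \<or> E' (f x) (f y)"
  shows "\<exists>ys. walk_betw V' E' (f u) ys (f v) \<and> length ys \<le> length xs"
proof -
  have "walk V E xs \<Longrightarrow> \<exists>ys. walk_betw V' E' (f (hd xs)) ys (f (last xs)) \<and> length ys \<le> length xs"
  proof (induction xs rule: induct_list012)
    case 1
    then show ?case by (simp add: walk_def)
  next
    case (2 x)
    then show ?case
      using assms(2) by (intro exI[of _ "[f x]"]) (auto simp: walk_betw_def walk_def)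
  next
    case (3 x y zs)
    then obtain ys where ys: "walk_betw V' E' (f y) ys (f (last (y # zs)))" "length ys \<le> Suc (length zs)"
      by (auto simp: walk_Cons_Cons)
    show ?case
    proof (cases "f x = f y")
      case True
      then show ?thesis using ys by auto
    next
      case False
      have "x \<in> V" "E x y" using "3.prems" by (simp_all add: walk_Cons_Cons)
      then have "f x \<in> V'" "E' (f x) (f y)" using False assms(2,3) by auto
      moreover obtain ys' where "ys = f y # ys'"
        using ys(1) by (auto simp: walk_betw_def walk_def neq_Nil_conv)
      ultimately have "walk V' E' (f x # ys)"
        using ys(1) by (simp add: walk_Cons_Cons walk_betw_def)
      then show ?thesis
        using ys by (intro exI[of _ "f x # ys"]) (auto simp: walk_betw_def walk_def)
    qed
  qed
  then show ?thesis
    using assms(1) by (auto simp: walk_betw_def)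
qed

lemma dist_le_length: "walk_betw V E u xs v \<Longrightarrow> dist V E u v \<le> length xs - 1"
  unfolding dist_def by (rule Least_le) (auto simp: walk_betw_def walk_def)

lemma geodesic_exists:
  assumes "walk_betw V E u xs v"
  obtains ys where "geodesic V E u ys v"
proof -
  have "\<exists>n ys. walk_betw V E u ys v \<and> length ys = Suc n"
    using assms by (auto simp: walk_betw_def walk_def) (metis Suc_pred length_greater_0_conv)
  then have "\<exists>ys. walk_betw V E u ys v \<and> length ys = Suc (dist V E u v)"
    unfolding dist_def by (rule LeastI_ex)
  then show ?thesis
    using that unfolding geodesic_def by blast
qed

lemma dist_triangle:
  assumes "walk_betw V E u xs v" "walk_betw V E v ys w"
  shows "dist V E u w \<le> dist V E u v + dist V E v w"
proof -
  obtain xs' ys' where "geodesic V E u xs' v" "geodesic V E v ys' w"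
    using assms geodesic_exists by metis
  then have "walk_betw V E u (xs' @ tl ys') w"
    and "length (xs' @ tl ys') = Suc (dist V E u v) + Suc (dist V E v w) - 1"
    using walk_betw_append[of V E u xs' v ys' w] by (auto simp: geodesic_def)
  then show ?thesis
    using dist_le_length by fastforce
qed

lemma dist_self: "u \<in> V \<Longrightarrow> dist V E u u = 0"
  using dist_le_length[of V E u "[u]" u] by (simp add: walk_betw_def walk_def)

lemma dist_contract_le:
  assumes "walk_betw V E u xs v" "f ` V \<subseteq> V'"
    and "\<And>x y. E x y \<Longrightarrow> f x = f y \<or> E' (f x) (f y)"
  shows "dist V' E' (f u) (f v) \<le> dist V E u v"
proof -
  obtain xs' where "geodesic V E u xs' v"
    using assms(1) geodesic_exists by metis
  then obtain ys where "walk_betw V' E' (f u) ys (f v)" "length ys \<le> Suc (dist V E u v)"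
    using walk_betw_contract[OF _ assms(2,3)] unfolding geodesic_def by metis
  then show ?thesis
    using dist_le_length by fastforce
qed

lemma geodesic_nth_dist:
  assumes geo: "geodesic V E u xs v" and ik: "i \<le> k" "k < length xs"
  shows "dist V E (xs ! i) (xs ! k) = k - i"
proof -
  define n where "n = length xs - 1"
  have "xs \<noteq> []" using ik by auto
  moreover have "walk V E xs" "hd xs = u" "last xs = v" "length xs = Suc (dist V E u v)"
    using geo by (auto simp: geodesic_def walk_betw_def)
  ultimately have xs: "walk V E xs" "xs ! 0 = u" "xs ! n = v" "n = dist V E u v"
    by (simp_all add: hd_conv_nth last_conv_nth n_def)
  have sub: "walk_betw V E (xs ! a) (take (Suc (b - a)) (drop a xs)) (xs ! b)"
    if "a \<le> b" "b \<le> n" for a b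
    using walk_betw_subwalk[OF xs(1) that(1)] that ik n_def by simp
  have le: "dist V E (xs ! a) (xs ! b) \<le> b - a" if "a \<le> b" "b \<le> n" for a b
    using dist_le_length[OF sub[OF that]] that ik n_def by simp
  have tri: "dist V E (xs ! a) (xs ! c) \<le> dist V E (xs ! a) (xs ! b) + dist V E (xs ! b) (xs ! c)"
    if "a \<le> b" "b \<le> c" "c \<le> n" for a b c
    using dist_triangle[OF sub sub] that by simp
  have "i \<le> n" "k \<le> n" using ik n_def by simp_all
  then have "n \<le> i + dist V E (xs ! i) (xs ! k) + (n - k)"
    using tri[of 0 i n] tri[of i k n] le[of 0 i] le[of k n] ik xs(2-4) by simp
  then have "k - i \<le> dist V E (xs ! i) (xs ! k)"
    using ik n_def by linarith
  then show ?thesis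
    using le[of i k] ik n_def by simp
qed

lemma geodesic_through:
  assumes "walk_betw V E x xs y" "walk_betw V E y ys z"
    and "dist V E x y + dist V E y z = dist V E x z"
  obtains zs where "geodesic V E x zs z" "x \<in> set zs" "y \<in> set zs" "z \<in> set zs"
proof -
  obtain xs' ys' where xs': "geodesic V E x xs' y" and ys': "geodesic V E y ys' z"
    using assms geodesic_exists by metis
  let ?zs = "xs' @ tl ys'"
  have "walk_betw V E x ?zs z" "length ?zs = Suc (dist V E x y) + Suc (dist V E y z) - 1"
    using walk_betw_append[of V E x xs' y ys' z] xs' ys' by (auto simp: geodesic_def)
  then have "geodesic V E x ?zs z" "z \<in> set ?zs"
    using assms(3) unfolding geodesic_def walk_betw_def walk_def
    by (simp, metis last_in_set)
  moreover have "x \<in> set xs'" "y \<in> set xs'"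
    using xs' by (auto simp: geodesic_def walk_betw_def walk_def)
  ultimately show ?thesis
    using that by simp
qed

lemma gp_set_dist_strict_triangle:
  assumes "connected_graph V E" "gp_set V E S" "x \<in> S" "y \<in> S" "z \<in> S"
    and "0 < dist V E x y" "0 < dist V E y z"
  shows "dist V E x z < dist V E x y + dist V E y z"
proof (rule ccontr)
  assume not_strict: "\<not> ?thesis"
  have V: "x \<in> V" "y \<in> V" "z \<in> V" using assms by (auto simp: gp_set_def)
  then obtain xs ys where walks: "walk_betw V E x xs y" "walk_betw V E y ys z"
    using assms(1) unfolding connected_graph_def by meson
  then have additive: "dist V E x y + dist V E y z = dist V E x z"
    using not_strict dist_triangle[OF walks] by linarith
  have "x \<noteq> y" "y \<noteq> z" "x \<noteq> z"
    using assms(6,7) additive dist_self[OF V(1)] dist_self[OF V(2)] by auto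
  then have "\<not> (\<exists>u v zs. geodesic V E u zs v \<and> x \<in> set zs \<and> y \<in> set zs \<and> z \<in> set zs)"
    using assms(2-5) unfolding gp_set_def by blast
  then show False
    using geodesic_through[OF walks additive] by blast
qed

lemma gp_set_dist_lt_sum:
  assumes conn: "connected_graph V E" and gp: "gp_set V E S" and S: "x \<in> S" "y \<in> S" "z \<in> S"
    and le: "dist V E x y \<le> a" "dist V E y z \<le> b" and pos: "0 < a" "0 < b"
  shows "dist V E x z < a + b"
proof -
  have "x \<in> V" "y \<in> V" "z \<in> V" using gp S by (auto simp: gp_set_def)
  then obtain xs ys where "walk_betw V E x xs y" "walk_betw V E y ys z"
    using conn unfolding connected_graph_def by meson
  then have tri: "dist V E x z \<le> dist V E x y + dist V E y z"
    by (rule dist_triangle)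
  show ?thesis
  proof (cases "0 < dist V E x y \<and> 0 < dist V E y z")
    case True
    then show ?thesis
      using gp_set_dist_strict_triangle[OF conn gp S] le by linarith
  next
    case False
    then show ?thesis
      using tri le pos by linarith
  qed
qed

lemma gp_setI_nth:
  assumes "S \<subseteq> V"
    and "\<And>u xs v i j k. geodesic V E u xs v \<Longrightarrow> i < j \<Longrightarrow> j < k \<Longrightarrow> k < length xs \<Longrightarrow>
      xs ! i \<in> S \<Longrightarrow> xs ! j \<in> S \<Longrightarrow> xs ! k \<in> S \<Longrightarrow> False"
  shows "gp_set V E S"
  unfolding gp_set_def
proof (intro conjI ballI impI notI)
  fix x y z assume S: "x \<in> S" "y \<in> S" "z \<in> S" and distinct: "x \<noteq> y \<and> y \<noteq> z \<and> x \<noteq> z"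
  assume "\<exists>u v xs. geodesic V E u xs v \<and> x \<in> set xs \<and> y \<in> set xs \<and> z \<in> set xs"
  then obtain u v xs a b c where geo: "geodesic V E u xs v"
    and abc: "a < length xs" "b < length xs" "c < length xs" "xs ! a = x" "xs ! b = y" "xs ! c = z"
    by (metis in_set_conv_nth)
  then have "a \<noteq> b" "b \<noteq> c" "a \<noteq> c" using distinct by auto
  then show False
    using assms(2)[OF geo] abc S by (metis linorder_neqE_nat)
qed (use assms(1) in simp)

lemma finite_gp_set_cards: "finite V \<Longrightarrow> finite (card ` {S. gp_set V E S})"
proof -
  assume "finite V"
  moreover have "card ` {S. gp_set V E S} \<subseteq> card ` Pow V" by (auto simp: gp_set_def)
  ultimately show ?thesis by (meson finite_Pow_iff finite_imageI finite_subset)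
qed

lemma card_le_gp: "finite V \<Longrightarrow> gp_set V E S \<Longrightarrow> card S \<le> gp V E"
  unfolding gp_def by (intro Max_ge finite_gp_set_cards) auto

lemma gp_set_card_gp:
  assumes "finite V"
  obtains S where "gp_set V E S" "card S = gp V E"
proof -
  have "gp_set V E {}" by (simp add: gp_set_def)
  then have "gp V E \<in> card ` {S. gp_set V E S}"
    unfolding gp_def using finite_gp_set_cards[OF assms] by (intro Max_in) auto
  with that show ?thesis by auto
qed

definition zip_pad :: "'a list \<Rightarrow> 'b list \<Rightarrow> ('a \<times> 'b) list" where
  "zip_pad xs ys = map (\<lambda>i. (xs ! min i (length xs - 1), ys ! min i (length ys - 1)))
     [0..<max (length xs) (length ys)]"

lemma walk_nth_min_step:
  assumes "walk V E xs"
  shows "if Suc i < length xs then E (xs ! min i (length xs - 1)) (xs ! min (Suc i) (length xs - 1))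
    else xs ! min i (length xs - 1) = xs ! min (Suc i) (length xs - 1)"
proof (cases "Suc i < length xs")
  case True
  then have "min i (length xs - 1) = i" "min (Suc i) (length xs - 1) = Suc i"
    by simp_all
  then show ?thesis using True assms by (simp add: walk_def)
next
  case False
  then have "min i (length xs - 1) = length xs - 1" "min (Suc i) (length xs - 1) = length xs - 1"
    by simp_all
  then show ?thesis using False by simp
qed

lemma walk_betw_zip_pad:
  assumes irrefl: "irreflp EG" "irreflp EH"
    and gs: "walk_betw VG EG g gs g'" and hs: "walk_betw VH EH h hs h'"
  shows "walk_betw (VG \<times> VH) (strong_prod_edge EG EH) (g, h) (zip_pad gs hs) (g', h')"
    and "length (zip_pad gs hs) = max (length gs) (length hs)"
proof -
  let ?zs = "zip_pad gs hs"
  have ne: "gs \<noteq> []" "hs \<noteq> []" using gs hs by (auto simp: walk_betw_def walk_def)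
  show len: "length ?zs = max (length gs) (length hs)"
    by (simp add: zip_pad_def)
  have "min i (length gs - 1) < length gs" "min i (length hs - 1) < length hs" for i
    using ne by (simp_all add: min_less_iff_disj)
  then have "set ?zs \<subseteq> VG \<times> VH"
    using gs hs unfolding zip_pad_def walk_betw_def walk_def by (auto dest!: nth_mem)
  moreover have "strong_prod_edge EG EH (?zs ! i) (?zs ! Suc i)" if "Suc i < length ?zs" for i
    \<comment> \<open>consecutive pairs differ: the longer walk moves, by irreflexivity to a new vertex\<close>
    using walk_nth_min_step[of VG EG gs i] walk_nth_min_step[of VH EH hs i] that gs hs len
      irreflpD[OF irrefl(1)] irreflpD[OF irrefl(2)]
    by (auto simp: zip_pad_def strong_prod_edge_def walk_betw_def split: if_splits)
  moreover have "hd ?zs = (g, h)" "last ?zs = (g', h')"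
  proof -
    have nth: "?zs ! i = (gs ! min i (length gs - 1), hs ! min i (length hs - 1))"
      if "i < length ?zs" for i
      using that by (simp add: zip_pad_def)
    have pos: "0 < length ?zs" using len ne by (simp add: less_max_iff_disj)
    have "min (length ?zs - 1) (length gs - 1) = length gs - 1"
      "min (length ?zs - 1) (length hs - 1) = length hs - 1"
      using len by simp_all
    then have "?zs ! 0 = (hd gs, hd hs)" "?zs ! (length ?zs - 1) = (last gs, last hs)"
      using nth[OF pos] nth[of "length ?zs - 1"] pos ne by (simp_all add: hd_conv_nth last_conv_nth)
    then show "hd ?zs = (g, h)" "last ?zs = (g', h')"
      using gs hs pos by (simp_all add: walk_betw_def hd_conv_nth last_conv_nth)
  qed
  ultimately show "walk_betw (VG \<times> VH) (strong_prod_edge EG EH) (g, h) ?zs (g', h')"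
    using ne len by (auto simp: walk_betw_def walk_def)
qed

lemma connected_strong_prod:
  assumes irrefl: "irreflp EG" "irreflp EH"
    and G: "connected_graph VG EG" and H: "connected_graph VH EH"
  shows "connected_graph (VG \<times> VH) (strong_prod_edge EG EH)"
  unfolding connected_graph_def
proof (intro conjI ballI)
  show "VG \<times> VH \<noteq> {}" using G H by (simp add: connected_graph_def)
  fix p q assume "p \<in> VG \<times> VH" "q \<in> VG \<times> VH"
  then have "fst p \<in> VG" "fst q \<in> VG" "snd p \<in> VH" "snd q \<in> VH" by auto
  then obtain gs hs where "walk_betw VG EG (fst p) gs (fst q)" "walk_betw VH EH (snd p) hs (snd q)"
    using G H unfolding connected_graph_def by meson
  then show "\<exists>zs. walk_betw (VG \<times> VH) (strong_prod_edge EG EH) p zs q"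
    using walk_betw_zip_pad[OF irrefl] by (metis prod.collapse)
qed

lemma dist_strong_prod:
  assumes irrefl: "irreflp EG" "irreflp EH"
    and G: "connected_graph VG EG" and H: "connected_graph VH EH"
    and p: "p \<in> VG \<times> VH" and q: "q \<in> VG \<times> VH"
  shows "dist (VG \<times> VH) (strong_prod_edge EG EH) p q
    = max (dist VG EG (fst p) (fst q)) (dist VH EH (snd p) (snd q))"
proof (rule antisym)
  have "fst p \<in> VG" "fst q \<in> VG" "snd p \<in> VH" "snd q \<in> VH" using p q by auto
  then obtain gs hs where "geodesic VG EG (fst p) gs (fst q)" "geodesic VH EH (snd p) hs (snd q)"
    using G H geodesic_exists unfolding connected_graph_def by metis
  then have "walk_betw (VG \<times> VH) (strong_prod_edge EG EH) p (zip_pad gs hs) q"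
    and "length (zip_pad gs hs) = Suc (max (dist VG EG (fst p) (fst q)) (dist VH EH (snd p) (snd q)))"
    using walk_betw_zip_pad[OF irrefl] unfolding geodesic_def by fastforce+
  then show "dist (VG \<times> VH) (strong_prod_edge EG EH) p q
    \<le> max (dist VG EG (fst p) (fst q)) (dist VH EH (snd p) (snd q))"
    using dist_le_length by fastforce
  obtain zs where zs: "walk_betw (VG \<times> VH) (strong_prod_edge EG EH) p zs q"
    using connected_strong_prod[OF irrefl G H] p q unfolding connected_graph_def by blast
  have "dist VG EG (fst p) (fst q) \<le> dist (VG \<times> VH) (strong_prod_edge EG EH) p q"
    by (rule dist_contract_le[OF zs]) (auto simp: strong_prod_edge_def)
  moreover have "dist VH EH (snd p) (snd q) \<le> dist (VG \<times> VH) (strong_prod_edge EG EH) p q"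
    by (rule dist_contract_le[OF zs]) (auto simp: strong_prod_edge_def)
  ultimately show "max (dist VG EG (fst p) (fst q)) (dist VH EH (snd p) (snd q))
    \<le> dist (VG \<times> VH) (strong_prod_edge EG EH) p q"
    by simp
qed

lemma gp_set_strong_prod:
  assumes irrefl: "irreflp EG" "irreflp EH"
    and G: "connected_graph VG EG" and H: "connected_graph VH EH"
    and S: "gp_set VG EG S" and T: "gp_set VH EH T"
  shows "gp_set (VG \<times> VH) (strong_prod_edge EG EH) (S \<times> T)"
proof (rule gp_setI_nth)
  show "S \<times> T \<subseteq> VG \<times> VH" using S T by (auto simp: gp_set_def)
  fix u xs v i j k
  assume geo: "geodesic (VG \<times> VH) (strong_prod_edge EG EH) u xs v"
    and ijk: "i < j" "j < k" "k < length xs"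
    and in_ST: "xs ! i \<in> S \<times> T" "xs ! j \<in> S \<times> T" "xs ! k \<in> S \<times> T"
  obtain g1 h1 g2 h2 g3 h3 where
    xs: "xs ! i = (g1, h1)" "xs ! j = (g2, h2)" "xs ! k = (g3, h3)"
    by (metis prod.exhaust)
  then have in_V: "(g1, h1) \<in> VG \<times> VH" "(g2, h2) \<in> VG \<times> VH" "(g3, h3) \<in> VG \<times> VH"
    using in_ST \<open>S \<times> T \<subseteq> VG \<times> VH\<close> by auto
  note dist_prod = dist_strong_prod[OF irrefl G H]
  have G12: "dist VG EG g1 g2 \<le> j - i" and H12: "dist VH EH h1 h2 \<le> j - i"
    using geodesic_nth_dist[OF geo, of i j] dist_prod[OF in_V(1,2)] xs ijk by simp_all
  have G23: "dist VG EG g2 g3 \<le> k - j" and H23: "dist VH EH h2 h3 \<le> k - j"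
    using geodesic_nth_dist[OF geo, of j k] dist_prod[OF in_V(2,3)] xs ijk by simp_all
  have "dist VG EG g1 g3 < k - i"
    using gp_set_dist_lt_sum[OF G S _ _ _ G12 G23] in_ST xs ijk by simp
  moreover have "dist VH EH h1 h3 < k - i"
    using gp_set_dist_lt_sum[OF H T _ _ _ H12 H23] in_ST xs ijk by simp
  moreover have "max (dist VG EG g1 g3) (dist VH EH h1 h3) = k - i"
    using geodesic_nth_dist[OF geo, of i k] dist_prod[OF in_V(1,3)] xs ijk by simp
  ultimately show False
    by simp
qed

theorem theorem4p2:
  fixes VG :: "'a set" and EG :: "'a \<Rightarrow> 'a \<Rightarrow> bool"
    and VH :: "'b set" and EH :: "'b \<Rightarrow> 'b \<Rightarrow> bool"
  assumes "simple_graph VG EG" and "connected_graph VG EG"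
    and "simple_graph VH EH" and "connected_graph VH EH"
  shows "gp (VG \<times> VH) (strong_prod_edge EG EH) \<ge> gp VG EG * gp VH EH"
proof -
  have fin: "finite VG" "finite VH" and irrefl: "irreflp EG" "irreflp EH"
    using assms by (auto simp: simple_graph_def irreflp_def)
  obtain S where S: "gp_set VG EG S" "card S = gp VG EG"
    using gp_set_card_gp[OF fin(1)] by blast
  obtain T where T: "gp_set VH EH T" "card T = gp VH EH"
    using gp_set_card_gp[OF fin(2)] by blast
  have "gp VG EG * gp VH EH = card (S \<times> T)"
    using S T by (simp add: card_cartesian_product)
  also have "\<dots> \<le> gp (VG \<times> VH) (strong_prod_edge EG EH)"
    using card_le_gp[OF _ gp_set_strong_prod[OF irrefl assms(2,4) S(1) T(1)]] fin by simp
  finally show ?thesis .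
qed

end
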